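(* Let $U\in\mathrm{St}(r,n)$ and suppose $\Psi^{-1}U=P\begin{bsmallmatrix}K_r\\ O_{n-r,r}\end{bsmallmatrix}$ with $P\in\mathbb{C}^{n\times n}$ unitary and $K_r\in\mathbb{C}^{r\times r}$ invertible. Then there is a unitary matrix $W_P\in\mathbb{C}^{r\times r}$ such that $K_r=(\Sigma_{11}^P)^{-1/2}W_P$. Moreover, for any orthogonal $W\in\mathbb{R}^{r\times r}$, $\Psi P\begin{bsmallmatrix}(\Sigma_{11}^P)^{-1/2}W_PW\\ O_{n-r,r}\end{bsmallmatrix}=UW\in\mathrm{St}(r,n)$.
   Context: $\mathrm{St}(r,n):=\{X\in\mathbb{R}^{n\times r}\mid X^{\top}X=I_r\}$, $1\le r\le n-1$. $\Psi\in\mathbb{C}^{n\times n}$ is an invertible matrix whose columns are unit-norm (generalized) eigenvectors of a real matrix $A\in\mathbb{R}^{n\times n}$. For unitary $P$, $\Sigma^P:=P^{\dagger}\Psi^{\dagger}\Psi P$ and $\Sigma_{11}^P\in\mathbb{C}^{r\times r}$ is its upper-left $r\times r$ block (a positive definite Hermitian matrix); $(\Sigma_{11}^P)^{-1/2}$ is its inverse Hermitian positive definite square root. *)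

theory Defs
  imports Complex_Main "Jordan_Normal_Form.Matrix"
begin

definition cadj :: "complex mat \<Rightarrow> complex mat" where
  "cadj M = mat (dim_col M) (dim_row M) (\<lambda>(i,j). cnj (M $$ (j,i)))"

definition unitary_mat :: "nat \<Rightarrow> complex mat \<Rightarrow> bool" where
  "unitary_mat n P \<longleftrightarrow> P \<in> carrier_mat n n \<and> cadj P * P = 1\<^sub>m n \<and> P * cadj P = 1\<^sub>m n"

definition real_orthogonal_mat :: "nat \<Rightarrow> real mat \<Rightarrow> bool" where
  "real_orthogonal_mat n W \<longleftrightarrow> W \<in> carrier_mat n n \<and>
     transpose_mat W * W = 1\<^sub>m n \<and> W * transpose_mat W = 1\<^sub>m n"

definition stiefel :: "nat \<Rightarrow> nat \<Rightarrow> real mat set" where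
  "stiefel r n = {X \<in> carrier_mat n r. transpose_mat X * X = 1\<^sub>m r}"

definition hermitian_mat :: "complex mat \<Rightarrow> bool" where
  "hermitian_mat S \<longleftrightarrow> S \<in> carrier_mat (dim_row S) (dim_row S) \<and> cadj S = S"

definition hpd_mat :: "complex mat \<Rightarrow> bool" where
  "hpd_mat S \<longleftrightarrow> hermitian_mat S \<and>
     (\<forall>v \<in> carrier_vec (dim_row S). v \<noteq> 0\<^sub>v (dim_row S) \<longrightarrow>
        0 < Re (\<Sum>i<dim_row S. cnj (v $ i) * (S *\<^sub>v v) $ i))"

definition inv_sqrt_mat :: "complex mat \<Rightarrow> complex mat" where
  "inv_sqrt_mat M = (THE S. S \<in> carrier_mat (dim_row M) (dim_row M) \<and> hpd_mat S \<and>
                           S * S * M = 1\<^sub>m (dim_row M))"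

definition ul_block :: "nat \<Rightarrow> complex mat \<Rightarrow> complex mat" where
  "ul_block r M = mat r r (\<lambda>(i,j). M $$ (i,j))"

definition Sigma_P :: "complex mat \<Rightarrow> complex mat \<Rightarrow> complex mat" where
  "Sigma_P \<Psi> P = cadj P * cadj \<Psi> * \<Psi> * P"

definition Sigma11 :: "nat \<Rightarrow> complex mat \<Rightarrow> complex mat \<Rightarrow> complex mat" where
  "Sigma11 r \<Psi> P = ul_block r (Sigma_P \<Psi> P)"

definition cmat :: "real mat \<Rightarrow> complex mat" where
  "cmat M = map_mat complex_of_real M"

definition gen_eigenvector :: "complex mat \<Rightarrow> complex vec \<Rightarrow> bool" where
  "gen_eigenvector A v \<longleftrightarrow> v \<in> carrier_vec (dim_row A) \<and> v \<noteq> 0\<^sub>v (dim_row A) \<and>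
     (\<exists>ev k. k \<ge> 1 \<and> ((A - ev \<cdot>\<^sub>m 1\<^sub>m (dim_row A)) ^\<^sub>m k) *\<^sub>v v = 0\<^sub>v (dim_row A))"

definition unit_vec_norm :: "complex vec \<Rightarrow> bool" where
  "unit_vec_norm v \<longleftrightarrow> (\<Sum>i<dim_vec v. (cmod (v $ i))\<^sup>2) = 1"

end

(*
  Write Y = Psi P and K0 = [K; 0].  The hypothesis says cmat U = Y K0, so orthonormality of the
  columns of U reads K0^H (Y^H Y) K0 = I, that is K^H Sigma11 K = I.  Hence N = K K^H is the
  inverse of Sigma11 and is Hermitian positive definite; its positive definite square root T is
  therefore Sigma11^(-1/2), and W_P = T Sigma11 K is unitary with T W_P = K.  The second claim
  is then Y [K W; 0] = Y K0 W = U W.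

  The square root comes from the spectral theorem, obtained from a unitary Schur decomposition
  built with Householder reflections.  Its uniqueness is a trace argument: if S1^2 = S2^2, then
  H = S1 + S2 anticommutes with D = S1 - S2, so tr (D H D) = - tr (D H D) = 0, and positive
  definiteness of H forces D = 0.
*)

theory Submission
  imports Defs "Jordan_Normal_Form.Spectral_Radius"
begin

section \<open>Conjugate transpose and the complex inner product\<close>

lemma mult_mat_vec_zero [simp]: "A \<in> carrier_mat m n \<Longrightarrow> A *\<^sub>v 0\<^sub>v n = 0\<^sub>v m"
  by (rule eq_vecI) auto

lemma cnj_of_bool [simp]: "cnj (of_bool b) = of_bool b"
  by (cases b) auto

lemma sum_of_bool_delta:
  fixes f :: "nat \<Rightarrow> 'a :: semiring_1"
  shows "i < n \<Longrightarrow> (\<Sum>k<n. of_bool (i = k) * f k) = f i"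
    and "j < n \<Longrightarrow> (\<Sum>k<n. f k * of_bool (k = j)) = f j"
proof -
  show "i < n \<Longrightarrow> (\<Sum>k<n. of_bool (i = k) * f k) = f i"
    by (subst sum.cong[OF refl, of _ _ "\<lambda>k. if k = i then f k else 0"]) auto
  show "j < n \<Longrightarrow> (\<Sum>k<n. f k * of_bool (k = j)) = f j"
    by (subst sum.cong[OF refl, of _ _ "\<lambda>k. if k = j then f k else 0"]) auto
qed

lemma index_mult_mat_sum:
  "A \<in> carrier_mat m k \<Longrightarrow> B \<in> carrier_mat k n \<Longrightarrow> i < m \<Longrightarrow> j < n \<Longrightarrow>
    (A * B) $$ (i, j) = (\<Sum>l<k. A $$ (i, l) * B $$ (l, j))"
  by (simp add: scalar_prod_def lessThan_atLeast0)

lemma eq_mult_of_right_inverse: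
  fixes B C :: "'a :: semiring_1 mat"
  assumes "B \<in> carrier_mat n n" "C \<in> carrier_mat n n" "B * C = 1\<^sub>m n" "X \<in> carrier_mat n k"
    and "C * X = Z"
  shows "X = B * Z"
  using assms assoc_mult_mat[of B n n C n X k] left_mult_one_mat[OF assms(4)] by simp

lemma carrier_cadj [simp]: "M \<in> carrier_mat m n \<Longrightarrow> cadj M \<in> carrier_mat n m"
  and dim_row_cadj [simp]: "dim_row (cadj M) = dim_col M"
  and dim_col_cadj [simp]: "dim_col (cadj M) = dim_row M"
  and index_cadj [simp]: "i < dim_col M \<Longrightarrow> j < dim_row M \<Longrightarrow> cadj M $$ (i, j) = cnj (M $$ (j, i))"
  unfolding cadj_def by auto

lemma cadj_cadj [simp]: "cadj (cadj M) = M"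
  by (rule eq_matI) auto

lemma cadj_one [simp]: "cadj (1\<^sub>m n) = 1\<^sub>m n"
  and cadj_zero [simp]: "cadj (0\<^sub>m m n) = 0\<^sub>m n m"
  by (rule eq_matI; auto)+

lemma cadj_mult:
  "A \<in> carrier_mat m k \<Longrightarrow> B \<in> carrier_mat k n \<Longrightarrow> cadj (A * B) = cadj B * cadj A"
  by (rule eq_matI) (auto simp: scalar_prod_def mult.commute intro!: sum.cong)

lemma cadj_four_block_mat:
  assumes "A \<in> carrier_mat m1 n1" "B \<in> carrier_mat m1 n2" "C \<in> carrier_mat m2 n1" "D \<in> carrier_mat m2 n2"
  shows "cadj (four_block_mat A B C D) = four_block_mat (cadj A) (cadj C) (cadj B) (cadj D)"
  by (rule eq_matI) (use assms in auto)

lemma cadj_eq_self_index: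
  assumes "S \<in> carrier_mat n n" "cadj S = S" "i < n" "j < n"
  shows "cnj (S $$ (j, i)) = S $$ (i, j)"
  by (metis assms carrier_matD index_cadj)

lemma row_cadj: "j < dim_col M \<Longrightarrow> row (cadj M) j = conjugate (col M j)"
  by (rule eq_vecI) auto

lemma cscalar_prod_self_real: "v \<bullet>c v = complex_of_real (Re (v \<bullet>c v))"
  using conjugate_square_ge_0_vec[of v] by (simp add: less_eq_complex_def complex_eq_iff)

lemma cscalar_prod_self_pos:
  "v \<in> carrier_vec n \<Longrightarrow> v \<noteq> 0\<^sub>v n \<Longrightarrow> 0 < Re (v \<bullet>c v)"
  using conjugate_square_greater_0_vec[of v n] by (simp add: less_complex_def)

lemma cscalar_prod_cadj:
  assumes "A \<in> carrier_mat m n" "v \<in> carrier_vec n" "w \<in> carrier_vec m"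
  shows "(A *\<^sub>v v) \<bullet>c w = v \<bullet>c (cadj A *\<^sub>v w)"
proof -
  have "(A *\<^sub>v v) \<bullet>c w = (\<Sum>i<m. \<Sum>k<n. A $$ (i, k) * v $ k * cnj (w $ i))"
    using assms by (simp add: scalar_prod_def sum_distrib_right lessThan_atLeast0)
  also have "\<dots> = (\<Sum>k<n. \<Sum>i<m. v $ k * cnj (cnj (A $$ (i, k)) * w $ i))"
    by (subst sum.swap) (simp add: ac_simps)
  also have "\<dots> = v \<bullet>c (cadj A *\<^sub>v w)"
    using assms by (simp add: scalar_prod_def sum_distrib_left lessThan_atLeast0)
  finally show ?thesis .
qed

lemma cscalar_prod_cadj_mult_mult:
  assumes X: "X \<in> carrier_mat m n" and S: "S \<in> carrier_mat m m" and v: "v \<in> carrier_vec n"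
  shows "((cadj X * S * X) *\<^sub>v v) \<bullet>c v = (S *\<^sub>v (X *\<^sub>v v)) \<bullet>c (X *\<^sub>v v)"
proof -
  have "(cadj X * S * X) *\<^sub>v v = cadj X *\<^sub>v (S *\<^sub>v (X *\<^sub>v v))"
    using assms by (simp add: assoc_mult_mat_vec[of _ n m] mult_carrier_mat[of _ n m])
  then show ?thesis
    using cscalar_prod_cadj[of "cadj X" n m "S *\<^sub>v (X *\<^sub>v v)" v] assms by simp
qed

lemma diag_cadj_mult_mult:
  assumes X: "X \<in> carrier_mat m n" and S: "S \<in> carrier_mat m m" and j: "j < n"
  shows "(cadj X * S * X) $$ (j, j) = (S *\<^sub>v col X j) \<bullet>c col X j"
proof -
  have "(cadj X * S * X) $$ (j, j) = col (cadj X * S * X) j $ j"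
    using X S j by (intro index_col[symmetric]) auto
  also have "col (cadj X * S * X) j = cadj X *\<^sub>v (S *\<^sub>v col X j)"
    using assms col_mult2[of "cadj X * S" n m X n j] assoc_mult_mat_vec[of "cadj X" n m S m]
    by (simp add: mult_carrier_mat[of _ n m])
  also have "(cadj X *\<^sub>v (S *\<^sub>v col X j)) $ j = conjugate (col X j) \<bullet> (S *\<^sub>v col X j)"
    using X S j by (simp add: row_cadj)
  also have "\<dots> = (S *\<^sub>v col X j) \<bullet>c col X j"
    using X S by (intro conjugate_vec_sprod_comm[of _ m, symmetric]) auto
  finally show ?thesis .
qed

lemma hpd_mat_iff:
  assumes "S \<in> carrier_mat n n"
  shows "hpd_mat S \<longleftrightarrow>
    cadj S = S \<and> (\<forall>v \<in> carrier_vec n. v \<noteq> 0\<^sub>v n \<longrightarrow> 0 < Re ((S *\<^sub>v v) \<bullet>c v))"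
proof -
  have "(\<Sum>i<n. cnj (v $ i) * (S *\<^sub>v v) $ i) = (S *\<^sub>v v) \<bullet>c v" if "v \<in> carrier_vec n" for v
    using assms that by (simp add: scalar_prod_def lessThan_atLeast0 mult.commute)
  with assms show ?thesis
    unfolding hpd_mat_def hermitian_mat_def by auto
qed

lemma unitary_mat_cancel:
  assumes U: "unitary_mat n U" and X: "X \<in> carrier_mat n k"
  shows "cadj U * (U * X) = X" and "U * (cadj U * X) = X"
proof -
  have c: "U \<in> carrier_mat n n" "cadj U \<in> carrier_mat n n"
    using U unfolding unitary_mat_def by auto
  show "cadj U * (U * X) = X"
    using U X c assoc_mult_mat[of "cadj U" n n U n X k] unfolding unitary_mat_def by simp
  show "U * (cadj U * X) = X"
    using U X c assoc_mult_mat[of U n n "cadj U" n X k] unfolding unitary_mat_def by simp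
qed

lemma unitary_matI:
  assumes "W \<in> carrier_mat r r" and "cadj W * W = 1\<^sub>m r"
  shows "unitary_mat r W"
  using assms mat_mult_left_right_inverse[of "cadj W" r W] unfolding unitary_mat_def by simp

lemma unitary_mat_smult:
  assumes U: "unitary_mat n U" and a: "cnj a * a = 1"
  shows "unitary_mat n (a \<cdot>\<^sub>m U)"
proof -
  have "cadj (a \<cdot>\<^sub>m U) * (a \<cdot>\<^sub>m U) = (cnj a * a) \<cdot>\<^sub>m (cadj U * U)"
    "(a \<cdot>\<^sub>m U) * cadj (a \<cdot>\<^sub>m U) = (a * cnj a) \<cdot>\<^sub>m (U * cadj U)"
    by (rule eq_matI; auto simp: scalar_prod_def sum_distrib_left ac_simps)+
  moreover have "a * cnj a = 1"
    using a by (simp add: mult.commute)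
  ultimately show ?thesis
    using U a unfolding unitary_mat_def by auto
qed

lemma unitary_mat_iff_similar_mat_wit:
  assumes "A \<in> carrier_mat n n"
  shows "similar_mat_wit A B U (cadj U) \<longleftrightarrow>
    unitary_mat n U \<and> B \<in> carrier_mat n n \<and> A = U * B * cadj U"
  using assms unfolding similar_mat_wit_def unitary_mat_def Let_def by auto

lemma unitary_similar_mat_wit_conj:
  assumes U: "unitary_mat n U" and A: "A \<in> carrier_mat n n"
  shows "similar_mat_wit A (cadj U * A * U) U (cadj U)"
proof -
  have c: "U \<in> carrier_mat n n" "cadj U \<in> carrier_mat n n"
    using U unfolding unitary_mat_def by auto
  have "U * (cadj U * A * U) * cadj U = (U * cadj U) * A * (U * cadj U)"
    using c A by (simp add: assoc_mult_mat[of _ n n _ n _ n] mult_carrier_mat[of _ n n])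
  also have "\<dots> = A"
    using U A unfolding unitary_mat_def by simp
  moreover have "cadj U * A * U \<in> carrier_mat n n"
    using c A by (simp add: mult_carrier_mat[of _ n n])
  ultimately show ?thesis
    unfolding unitary_mat_iff_similar_mat_wit[OF A] using U by metis
qed

section \<open>Unitary Schur decomposition and the spectral theorem\<close>

lemma householder_unitary:
  fixes w :: "complex vec" and c :: real
  assumes w: "w \<in> carrier_vec n" and c: "c * Re (w \<bullet>c w) = 2"
  shows "unitary_mat n (mat n n (\<lambda>(i, j). of_bool (i = j) - c * w $ i * cnj (w $ j)))"
    (is "unitary_mat n ?H")
proof -
  have ww: "(\<Sum>k<n. cnj (w $ k) * w $ k) = w \<bullet>c w"
    using w by (simp add: scalar_prod_def lessThan_atLeast0 mult.commute)
  have "c * c * Re (w \<bullet>c w) = 2 * c"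
    using c by (simp add: mult.assoc mult.commute[of c 2])
  then have c': "of_real c * of_real c * (w \<bullet>c w) = 2 * complex_of_real c"
    by (subst cscalar_prod_self_real) (metis of_real_mult of_real_numeral)
  have hermitian: "cadj ?H = ?H"
    by (rule eq_matI) auto
  have "?H * ?H = 1\<^sub>m n"
  proof (rule eq_matI)
    fix i j assume "i < dim_row (1\<^sub>m n)" "j < dim_col (1\<^sub>m n)"
    then have i: "i < n" and j: "j < n" by auto
    have "(?H * ?H) $$ (i, j) = (\<Sum>k<n. (of_bool (i = k) - c * w $ i * cnj (w $ k)) *
        (of_bool (k = j) - c * w $ k * cnj (w $ j)))"
      using i j by (simp add: scalar_prod_def lessThan_atLeast0)
    also have "\<dots> = (\<Sum>k<n. of_bool (i = k) * of_bool (k = j))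
        - (\<Sum>k<n. of_bool (i = k) * (c * w $ k * cnj (w $ j)))
        - (\<Sum>k<n. c * w $ i * cnj (w $ k) * of_bool (k = j))
        + (\<Sum>k<n. c * c * w $ i * cnj (w $ j) * (cnj (w $ k) * w $ k))"
      unfolding sum_subtractf[symmetric] sum.distrib[symmetric]
      by (rule sum.cong) (auto simp: algebra_simps)
    also have "\<dots> = of_bool (i = j) - 2 * c * w $ i * cnj (w $ j)
        + c * c * w $ i * cnj (w $ j) * (\<Sum>k<n. cnj (w $ k) * w $ k)"
      using i j by (simp add: sum_of_bool_delta sum_distrib_left)
    also have "\<dots> = of_bool (i = j) - 2 * c * w $ i * cnj (w $ j)
        + w $ i * cnj (w $ j) * (of_real c * of_real c * (w \<bullet>c w))"
      unfolding ww by (simp add: ac_simps)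
    also have "\<dots> = of_bool (i = j)"
      unfolding c' by simp
    finally show "(?H * ?H) $$ (i, j) = 1\<^sub>m n $$ (i, j)"
      using i j by simp
  qed auto
  then show ?thesis
    unfolding unitary_mat_def hermitian by simp
qed

(* The sign condition on the leading entry keeps the reflection vector e0 - u away from zero. *)
lemma householder_first_col:
  assumes u: "u \<in> carrier_vec n" and n: "0 < n" and unit: "u \<bullet>c u = 1"
    and u0: "u $ 0 = - complex_of_real t" and t: "0 \<le> t"
  shows "\<exists>H. unitary_mat n H \<and> col H 0 = u"
proof -
  define w where "w = unit_vec n 0 - u"
  have w: "w \<in> carrier_vec n"
    unfolding w_def using u by simp
  have w_index: "w $ k = of_bool (k = 0) - u $ k" if "k < n" for k
    unfolding w_def using u that by simp
  have "w \<bullet>c w = (\<Sum>k<n. of_bool (0 = k) * of_bool (k = 0)) - (\<Sum>k<n. of_bool (0 = k) * cnj (u $ k))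
      - (\<Sum>k<n. u $ k * of_bool (k = 0)) + (\<Sum>k<n. u $ k * cnj (u $ k))"
    unfolding sum_subtractf[symmetric] sum.distrib[symmetric]
    using w by (simp add: scalar_prod_def lessThan_atLeast0 w_index algebra_simps)
  also have "\<dots> = 2 + 2 * t"
    using n u unit u0 by (simp add: sum_of_bool_delta scalar_prod_def lessThan_atLeast0)
  finally have ww: "Re (w \<bullet>c w) = 2 * (1 + t)"
    by simp
  define c where "c = 1 / (1 + t)"
  have c: "c * Re (w \<bullet>c w) = 2" and cw0: "c * (1 + t) = 1"
    unfolding ww c_def using t by (simp_all add: field_simps)
  define H where "H = mat n n (\<lambda>(i, j). of_bool (i = j) - c * w $ i * cnj (w $ j))"
  have "col H 0 = u"
  proof (rule eq_vecI)
    fix i assume "i < dim_vec u"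
    then have i: "i < n" using u by simp
    have "col H 0 $ i = of_bool (i = 0) - w $ i * (c * (1 + t))"
      using i n w_index[OF n] u0 unfolding H_def by (simp add: ac_simps)
    then show "col H 0 $ i = u $ i"
      using i u w_index[OF i] unfolding cw0 by simp
  qed (use u H_def in auto)
  then show ?thesis
    unfolding H_def using householder_unitary[OF w c] by blast
qed

lemma unitary_mat_first_col_exists:
  assumes u: "u \<in> carrier_vec n" and n: "0 < n" and unit: "u \<bullet>c u = 1"
  shows "\<exists>H. unitary_mat n H \<and> col H 0 = u"
proof -
  define p where "p = (if u $ 0 = 0 then - 1 else - cnj (u $ 0) / cmod (u $ 0))"
  have "u $ 0 * cnj (u $ 0) = of_real (cmod (u $ 0)) * of_real (cmod (u $ 0))"
    using complex_norm_square[of "u $ 0"] by (simp add: power2_eq_square)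
  then have p: "cnj p * p = 1" and pu0: "p * u $ 0 = - cmod (u $ 0)"
    unfolding p_def by (auto simp: field_simps)
  have "(p \<cdot>\<^sub>v u) \<bullet>c (p \<cdot>\<^sub>v u) = 1"
    using u unit p by (simp add: conjugate_smult_vec ac_simps)
  then obtain H where H: "unitary_mat n H" "col H 0 = p \<cdot>\<^sub>v u"
    using householder_first_col[of "p \<cdot>\<^sub>v u" n "cmod (u $ 0)"] u n pu0 by auto
  have "H \<in> carrier_mat n n"
    using H(1) unfolding unitary_mat_def by simp
  then have "col (cnj p \<cdot>\<^sub>m H) 0 = cnj p \<cdot>\<^sub>v (p \<cdot>\<^sub>v u)"
    using H(2) n by simp
  then have "col (cnj p \<cdot>\<^sub>m H) 0 = u"
    using p by (simp add: smult_smult_assoc)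
  moreover have "unitary_mat n (cnj p \<cdot>\<^sub>m H)"
    using H p by (intro unitary_mat_smult) (simp_all add: mult.commute)
  ultimately show ?thesis
    by blast
qed

lemma unit_eigenvector_exists:
  fixes A :: "complex mat"
  assumes A: "A \<in> carrier_mat n n" and n: "0 < n"
  shows "\<exists>u e. u \<in> carrier_vec n \<and> u \<bullet>c u = 1 \<and> A *\<^sub>v u = e \<cdot>\<^sub>v u"
proof -
  obtain e v where v: "v \<in> carrier_vec n" "v \<noteq> 0\<^sub>v n" and ev: "A *\<^sub>v v = e \<cdot>\<^sub>v v"
    using spectrum_non_empty[OF A n] A unfolding spectrum_def eigenvalue_def eigenvector_def by auto
  define s where "s = Re (v \<bullet>c v)"
  have s: "0 < s" "v \<bullet>c v = of_real s"
    unfolding s_def using cscalar_prod_self_pos[OF v] cscalar_prod_self_real[of v] by auto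
  define a where "a = complex_of_real (1 / sqrt s)"
  have "1 / sqrt s * (1 / sqrt s) * s = 1"
    using s(1) by (simp add: field_simps)
  then have "a * cnj a * (v \<bullet>c v) = 1"
    unfolding a_def s(2) by (metis complex_cnj_complex_of_real of_real_1 of_real_mult)
  then have "(a \<cdot>\<^sub>v v) \<bullet>c (a \<cdot>\<^sub>v v) = 1"
    using v by (simp add: conjugate_smult_vec ac_simps)
  moreover have "A *\<^sub>v (a \<cdot>\<^sub>v v) = e \<cdot>\<^sub>v (a \<cdot>\<^sub>v v)"
    using A v ev by (simp add: mult_mat_vec smult_smult_assoc mult.commute)
  moreover have "a \<cdot>\<^sub>v v \<in> carrier_vec n"
    using v by simp
  ultimately show ?thesis
    by blast
qed

lemma unitary_deflation:
  fixes A :: "complex mat"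
  assumes A: "A \<in> carrier_mat (Suc m) (Suc m)"
  shows "\<exists>H B1 B2 B4. B1 \<in> carrier_mat 1 1 \<and> B2 \<in> carrier_mat 1 m \<and> B4 \<in> carrier_mat m m \<and>
           similar_mat_wit A (four_block_mat B1 B2 (0\<^sub>m m 1) B4) H (cadj H)"
proof -
  obtain u e where u: "u \<in> carrier_vec (Suc m)" "u \<bullet>c u = 1" and ev: "A *\<^sub>v u = e \<cdot>\<^sub>v u"
    using unit_eigenvector_exists[OF A] by blast
  obtain H where H: "unitary_mat (Suc m) H" and H0: "col H 0 = u"
    using unitary_mat_first_col_exists[OF u(1) _ u(2)] by blast
  have Hc: "H \<in> carrier_mat (Suc m) (Suc m)" "cadj H \<in> carrier_mat (Suc m) (Suc m)"
    using H unfolding unitary_mat_def by auto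
  define B where "B = cadj H * A * H"
  have Bc: "B \<in> carrier_mat (1 + m) (1 + m)"
    using Hc A unfolding B_def by (simp add: mult_carrier_mat[of _ "Suc m" "Suc m"])
  have "col B 0 = (cadj H * A) *\<^sub>v col H 0"
    unfolding B_def by (rule col_mult2) (use Hc A in auto)
  also have "\<dots> = cadj H *\<^sub>v (A *\<^sub>v col H 0)"
    by (rule assoc_mult_mat_vec) (use Hc A in \<open>auto simp: carrier_vecI\<close>)
  also have "\<dots> = e \<cdot>\<^sub>v (cadj H *\<^sub>v col H 0)"
    using Hc u H0 ev by (simp add: mult_mat_vec[of "cadj H" "Suc m" "Suc m"])
  also have "cadj H *\<^sub>v col H 0 = col (cadj H * H) 0"
    by (rule col_mult2[symmetric]) (use Hc in auto)
  finally have B0: "col B 0 = e \<cdot>\<^sub>v unit_vec (Suc m) 0"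
    using H unfolding unitary_mat_def by simp
  obtain B1 B2 B3 B4 where split: "split_block B 1 1 = (B1, B2, B3, B4)"
    by (cases "split_block B 1 1")
  note blocks = split_block[OF split, of m m]
  have "B3 = 0\<^sub>m m 1"
  proof (rule eq_matI)
    fix i j assume "i < dim_row (0\<^sub>m m 1)" "j < dim_col (0\<^sub>m m 1)"
    then show "B3 $$ (i, j) = 0\<^sub>m m 1 $$ (i, j)"
      using split Bc arg_cong[OF B0, of "\<lambda>v. v $ Suc i"]
      unfolding split_block_def by auto
  qed (use blocks Bc in auto)
  moreover have "similar_mat_wit A B H (cadj H)"
    unfolding B_def by (rule unitary_similar_mat_wit_conj[OF H A])
  ultimately show ?thesis
    using blocks Bc by auto
qed

lemma similar_mat_wit_four_block_unitary:
  assumes B1: "B1 \<in> carrier_mat k k" and B2: "B2 \<in> carrier_mat k m" and B4: "B4 \<in> carrier_mat m m"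
    and V: "similar_mat_wit B4 T4 V (cadj V)"
  defines "V' \<equiv> four_block_mat (1\<^sub>m k) (0\<^sub>m k m) (0\<^sub>m m k) V"
  shows "similar_mat_wit (four_block_mat B1 B2 (0\<^sub>m m k) B4) (four_block_mat B1 (B2 * V) (0\<^sub>m m k) T4)
    V' (cadj V')"
proof -
  have Vc: "V \<in> carrier_mat m m" "cadj V \<in> carrier_mat m m" "V * cadj V = 1\<^sub>m m"
    using similar_mat_witD2[OF B4 V] by auto
  have cadj_V': "cadj V' = four_block_mat (1\<^sub>m k) (0\<^sub>m k m) (0\<^sub>m m k) (cadj V)"
    unfolding V'_def using Vc by (simp add: cadj_four_block_mat[of _ k k _ m _ m])
  show ?thesis
    unfolding cadj_V' unfolding V'_def
  proof (rule similar_mat_wit_four_block[OF similar_mat_wit_refl[OF B1] V])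
    show "B2 = 1\<^sub>m k * (B2 * V) * cadj V"
      using B2 Vc by (simp add: assoc_mult_mat[of B2 k m V m "cadj V" m])
  qed (use B1 B2 B4 Vc in auto)
qed

lemma schur_unitary:
  assumes "A \<in> carrier_mat n n"
  shows "\<exists>U T. upper_triangular T \<and> similar_mat_wit A T U (cadj U)"
  using assms
proof (induction n arbitrary: A)
  case 0
  then have "similar_mat_wit A A (1\<^sub>m 0) (cadj (1\<^sub>m 0))"
    using similar_mat_wit_refl by simp
  moreover have "upper_triangular A"
    using 0 unfolding upper_triangular_def by simp
  ultimately show ?case by blast
next
  case (Suc m)
  obtain H B1 B2 B4 where B: "B1 \<in> carrier_mat 1 1" "B2 \<in> carrier_mat 1 m" "B4 \<in> carrier_mat m m"
    and AB: "similar_mat_wit A (four_block_mat B1 B2 (0\<^sub>m m 1) B4) H (cadj H)"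
    using unitary_deflation[OF Suc.prems] by blast
  obtain V T4 where T4: "upper_triangular T4" and V: "similar_mat_wit B4 T4 V (cadj V)"
    using Suc.IH[OF B(3)] by blast
  define V' where "V' = four_block_mat (1\<^sub>m 1) (0\<^sub>m 1 m) (0\<^sub>m m 1) V"
  have V'c: "V' \<in> carrier_mat (Suc m) (Suc m)"
    unfolding V'_def using similar_mat_witD2[OF B(3) V] by auto
  have "similar_mat_wit A (four_block_mat B1 (B2 * V) (0\<^sub>m m 1) T4) (H * V') (cadj V' * cadj H)"
    using similar_mat_wit_trans[OF AB similar_mat_wit_four_block_unitary[OF B V]] unfolding V'_def .
  moreover have "cadj (H * V') = cadj V' * cadj H"
    using similar_mat_witD2[OF Suc.prems AB] V'c by (intro cadj_mult) auto
  moreover have "upper_triangular (four_block_mat B1 (B2 * V) (0\<^sub>m m 1) T4)"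
    using B T4 similar_mat_witD2[OF B(3) V]
    by (intro upper_triangular_four_block) (auto simp: upper_triangular_def)
  ultimately show ?case
    by metis
qed

lemma hermitian_unitary_diagonalization:
  assumes A: "A \<in> carrier_mat n n" and herm: "cadj A = A"
  shows "\<exists>U d. similar_mat_wit A (mat_diag n (\<lambda>i. complex_of_real (d i))) U (cadj U)"
proof -
  obtain U T where T: "upper_triangular T" and AT: "similar_mat_wit A T U (cadj U)"
    using schur_unitary[OF A] by blast
  have c: "U \<in> carrier_mat n n" "T \<in> carrier_mat n n"
    using similar_mat_witD2[OF A AT] by auto
  have "T = cadj U * A * U"
    using similar_mat_witD2[OF _ similar_mat_wit_sym[OF AT]] c by simp
  then have herm_T: "cadj T = T"
    using A c herm
    by (simp add: cadj_mult[of _ n n _ n] mult_carrier_mat[of _ n n _ n] assoc_mult_mat[of _ n n _ n _ n])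
  have T_lower: "T $$ (i, j) = 0" if "i < n" "j < n" "i < j" for i j
  proof -
    have "T $$ (i, j) = cnj (T $$ (j, i))"
      using cadj_eq_self_index[OF c(2) herm_T that(1,2)] by simp
    then show ?thesis
      using T that c unfolding upper_triangular_def by simp
  qed
  define d where "d i = Re (T $$ (i, i))" for i
  have "T = mat_diag n (\<lambda>i. complex_of_real (d i))"
  proof (rule eq_matI)
    fix i j assume "i < dim_row (mat_diag n (\<lambda>i. complex_of_real (d i)))"
      "j < dim_col (mat_diag n (\<lambda>i. complex_of_real (d i)))"
    then have ij: "i < n" "j < n"
      by (auto simp: mat_diag_def)
    have "cnj (T $$ (i, i)) = T $$ (i, i)"
      using cadj_eq_self_index[OF c(2) herm_T ij(1,1)] .
    then show "T $$ (i, j) = mat_diag n (\<lambda>i. complex_of_real (d i)) $$ (i, j)"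
      using T T_lower[of i j] ij c unfolding upper_triangular_def mat_diag_def d_def
      by (cases i j rule: linorder_cases) (auto simp: complex_eq_iff)
  qed (use c in \<open>auto simp: mat_diag_def\<close>)
  then show ?thesis
    using AT by metis
qed

section \<open>Positive definite square roots\<close>

lemma mult_mat_vec_mat_diag:
  fixes f :: "nat \<Rightarrow> 'a :: semiring_1"
  assumes "v \<in> carrier_vec n"
  shows "mat_diag n f *\<^sub>v v = vec n (\<lambda>i. f i * v $ i)"
  by (rule eq_vecI) (use assms in \<open>auto simp: mat_diag_def scalar_prod_def sum.remove\<close>)

lemma hpd_mat_mat_diag:
  assumes pos: "\<And>i. i < n \<Longrightarrow> 0 < d i"
  shows "hpd_mat (mat_diag n (\<lambda>i. complex_of_real (d i)))" (is "hpd_mat ?R")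
proof -
  have "0 < Re ((?R *\<^sub>v v) \<bullet>c v)" if v: "v \<in> carrier_vec n" "v \<noteq> 0\<^sub>v n" for v
  proof -
    obtain k where k: "k < n" "v $ k \<noteq> 0"
      using v by (metis eq_vecI carrier_vecD index_zero_vec)
    have "(?R *\<^sub>v v) \<bullet>c v = (\<Sum>i<n. of_real (d i * (cmod (v $ i))\<^sup>2))"
      using v by (simp add: mult_mat_vec_mat_diag scalar_prod_def lessThan_atLeast0 mult.assoc
          flip: complex_norm_square)
    then have "Re ((?R *\<^sub>v v) \<bullet>c v) = (\<Sum>i<n. d i * (cmod (v $ i))\<^sup>2)"
      by simp
    also have "\<dots> > 0"
      using pos k by (intro sum_pos2[of _ k]) (auto simp: zero_less_mult_iff zero_le_mult_iff less_imp_le)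
    finally show ?thesis .
  qed
  moreover have "cadj ?R = ?R"
    by (rule eq_matI) (auto simp: mat_diag_def)
  ultimately show ?thesis
    by (simp add: hpd_mat_iff[of _ n])
qed

lemma hpd_mat_unitary_conj:
  assumes U: "unitary_mat n U" and R: "R \<in> carrier_mat n n" "hpd_mat R"
  shows "hpd_mat (U * R * cadj U)"
proof -
  have c: "U \<in> carrier_mat n n" "cadj U \<in> carrier_mat n n" "U * cadj U = 1\<^sub>m n"
    using U unfolding unitary_mat_def by auto
  have pos: "0 < Re ((R *\<^sub>v w) \<bullet>c w)" if "w \<in> carrier_vec n" "w \<noteq> 0\<^sub>v n" for w
    using R that hpd_mat_iff by blast
  have "0 < Re (((U * R * cadj U) *\<^sub>v v) \<bullet>c v)" if v: "v \<in> carrier_vec n" "v \<noteq> 0\<^sub>v n" for v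
  proof -
    have "cadj U *\<^sub>v v \<noteq> 0\<^sub>v n"
    proof
      assume "cadj U *\<^sub>v v = 0\<^sub>v n"
      then have "U *\<^sub>v (cadj U *\<^sub>v v) = 0\<^sub>v n"
        using c by auto
      then show False
        using v c by (simp add: assoc_mult_mat_vec[of U n n, symmetric])
    qed
    moreover have "((U * R * cadj U) *\<^sub>v v) \<bullet>c v = (R *\<^sub>v (cadj U *\<^sub>v v)) \<bullet>c (cadj U *\<^sub>v v)"
      using cscalar_prod_cadj_mult_mult[OF c(2) R(1) v(1)] by (simp only: cadj_cadj)
    ultimately show ?thesis
      using pos[of "cadj U *\<^sub>v v"] c v by simp
  qed
  moreover have "cadj (U * R * cadj U) = U * R * cadj U"
    using R c hpd_mat_iff[of R n]
    by (simp add: cadj_mult[of _ n n _ n] mult_carrier_mat[of _ n n _ n] assoc_mult_mat[of _ n n _ n _ n])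
  moreover have "U * R * cadj U \<in> carrier_mat n n"
    using R c by (simp add: mult_carrier_mat[of _ n n _ n])
  ultimately show ?thesis
    using hpd_mat_iff by blast
qed

lemma hpd_mat_unitary_diagonalization:
  assumes N: "N \<in> carrier_mat n n" "hpd_mat N"
  shows "\<exists>U d. unitary_mat n U \<and> (\<forall>i<n. 0 < d i) \<and>
           N = U * mat_diag n (\<lambda>i. complex_of_real (d i)) * cadj U"
proof -
  obtain U d where sim: "similar_mat_wit N (mat_diag n (\<lambda>i. complex_of_real (d i))) U (cadj U)"
    using hermitian_unitary_diagonalization[OF N(1)] N hpd_mat_iff by blast
  define D where "D = mat_diag n (\<lambda>i. complex_of_real (d i))"
  have U: "unitary_mat n U" and N_eq: "N = U * D * cadj U"
    using sim N(1) unfolding D_def unitary_mat_iff_similar_mat_wit[OF N(1)] by auto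
  have c: "U \<in> carrier_mat n n" "cadj U \<in> carrier_mat n n" "cadj U * U = 1\<^sub>m n"
    using U unfolding unitary_mat_def by auto
  have D_eq: "D = cadj U * N * U"
    using similar_mat_witD2(3)[OF mat_diag_dim similar_mat_wit_sym[OF sim]] unfolding D_def .
  have "0 < d i" if i: "i < n" for i
  proof -
    have "col U i \<bullet>c col U i = 1"
      using diag_cadj_mult_mult[OF c(1) one_carrier_mat i] c i by simp
    then have "col U i \<noteq> 0\<^sub>v n"
      by auto
    then have "0 < Re ((N *\<^sub>v col U i) \<bullet>c col U i)"
      using N c i hpd_mat_iff by auto
    also have "(N *\<^sub>v col U i) \<bullet>c col U i = D $$ (i, i)"
      unfolding D_eq using diag_cadj_mult_mult[OF c(1) N(1) i] ..
    finally show ?thesis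
      using i unfolding D_def by (simp add: mat_diag_def)
  qed
  then show ?thesis
    using U N_eq unfolding D_def by blast
qed

lemma hpd_mat_sqrt_exists:
  assumes N: "N \<in> carrier_mat n n" "hpd_mat N"
  shows "\<exists>S \<in> carrier_mat n n. hpd_mat S \<and> S * S = N"
proof -
  obtain U d where U: "unitary_mat n U" and d_pos: "\<forall>i<n. 0 < d i"
    and N_eq: "N = U * mat_diag n (\<lambda>i. complex_of_real (d i)) * cadj U"
    using hpd_mat_unitary_diagonalization[OF N] by blast
  have c: "U \<in> carrier_mat n n" "cadj U \<in> carrier_mat n n"
    using U unfolding unitary_mat_def by auto
  define R where "R = mat_diag n (\<lambda>i. complex_of_real (sqrt (d i)))"
  have R: "R \<in> carrier_mat n n" "hpd_mat R"
    unfolding R_def using d_pos by (auto intro: hpd_mat_mat_diag)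
  have RR: "R * R = mat_diag n (\<lambda>i. complex_of_real (d i))"
    unfolding R_def mat_diag_diag using d_pos
    by (auto simp: mat_diag_def less_imp_le simp flip: of_real_mult intro!: eq_matI)
  define S where "S = U * R * cadj U"
  have "S * S = N"
    using c R unfolding S_def N_eq RR[symmetric]
    by (simp add: assoc_mult_mat[of _ n n _ n _ n] mult_carrier_mat[of _ n n _ n]
        unitary_mat_cancel[OF U, where k = n])
  moreover have "S \<in> carrier_mat n n"
    unfolding S_def using c R by (simp add: mult_carrier_mat[of _ n n _ n])
  moreover have "hpd_mat S"
    unfolding S_def by (rule hpd_mat_unitary_conj[OF U R])
  ultimately show ?thesis
    by blast
qed

definition trace :: "'a :: comm_ring mat \<Rightarrow> 'a" where
  "trace A = (\<Sum>i<dim_row A. A $$ (i, i))"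

lemma trace_mult_eq_sum:
  "A \<in> carrier_mat m n \<Longrightarrow> B \<in> carrier_mat n m \<Longrightarrow>
    trace (A * B) = (\<Sum>i<m. \<Sum>k<n. A $$ (i, k) * B $$ (k, i))"
  by (simp add: trace_def index_mult_mat_sum del: index_mult_mat(1))

lemma trace_mult_comm:
  assumes "A \<in> carrier_mat m n" "B \<in> carrier_mat n m"
  shows "trace (A * B) = trace (B * A)"
  unfolding trace_mult_eq_sum[OF assms] trace_mult_eq_sum[OF assms(2,1)]
  by (subst sum.swap) (simp add: mult.commute)

lemma trace_cadj_mult_mult:
  assumes X: "X \<in> carrier_mat m n" and S: "S \<in> carrier_mat m m"
  shows "trace (cadj X * S * X) = (\<Sum>j<n. (S *\<^sub>v col X j) \<bullet>c col X j)"
  using diag_cadj_mult_mult[OF X S] X S by (simp add: trace_def mult_carrier_mat[of _ n m])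

lemma trace_anticomm_eq_0:
  fixes D H :: "'a :: field_char_0 mat"
  assumes D: "D \<in> carrier_mat n n" and H: "H \<in> carrier_mat n n" and anti: "H * D = - (D * H)"
  shows "trace (D * H * D) = 0"
proof -
  have "trace (D * H * D) = trace (H * D * D)"
    using D H by (simp add: assoc_mult_mat[of _ n n _ n _ n] trace_mult_comm[of D n n "H * D"])
  also have "\<dots> = (\<Sum>i<n. \<Sum>k<n. (- (D * H)) $$ (i, k) * D $$ (k, i))"
    unfolding anti by (rule trace_mult_eq_sum) (use D H in auto)
  also have "\<dots> = - trace (D * H * D)"
    using D H trace_mult_eq_sum[of "D * H" n n D] by (simp add: sum_negf)
  finally show ?thesis
    by (simp add: eq_neg_iff_add_eq_0 mult_2[symmetric])
qed

lemma square_eq_anticomm: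
  fixes S1 S2 :: "'a :: comm_ring_1 mat"
  assumes S1: "S1 \<in> carrier_mat n n" and S2: "S2 \<in> carrier_mat n n" and eq: "S1 * S1 = S2 * S2"
  shows "(S1 + S2) * (S1 - S2) = - ((S1 - S2) * (S1 + S2))"
proof (rule eq_matI)
  fix i j assume "i < dim_row (- ((S1 - S2) * (S1 + S2)))" "j < dim_col (- ((S1 - S2) * (S1 + S2)))"
  then have ij: "i < n" "j < n"
    using S1 S2 by auto
  have c: "S1 + S2 \<in> carrier_mat n n" "S1 - S2 \<in> carrier_mat n n"
    using S1 S2 by auto
  have "((S1 + S2) * (S1 - S2)) $$ (i, j) + ((S1 - S2) * (S1 + S2)) $$ (i, j) = (\<Sum>k<n.
      (S1 $$ (i, k) + S2 $$ (i, k)) * (S1 $$ (k, j) - S2 $$ (k, j))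
      + (S1 $$ (i, k) - S2 $$ (i, k)) * (S1 $$ (k, j) + S2 $$ (k, j)))"
    using ij S1 S2 c by (simp add: index_mult_mat_sum[of _ n n _ n] sum.distrib del: index_mult_mat(1))
  also have "\<dots> = 2 * (\<Sum>k<n. S1 $$ (i, k) * S1 $$ (k, j)) - 2 * (\<Sum>k<n. S2 $$ (i, k) * S2 $$ (k, j))"
    unfolding sum_distrib_left sum_subtractf[symmetric] by (rule sum.cong) (simp_all add: algebra_simps)
  also have "\<dots> = 0"
    using arg_cong[OF eq, of "\<lambda>M. M $$ (i, j)"] ij S1 S2
    by (simp add: index_mult_mat_sum[of _ n n _ n] del: index_mult_mat(1))
  finally show "((S1 + S2) * (S1 - S2)) $$ (i, j) = (- ((S1 - S2) * (S1 + S2))) $$ (i, j)"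
    using ij S1 S2 by (simp add: eq_neg_iff_add_eq_0 del: index_mult_mat(1))
qed (use S1 S2 in auto)

lemma hpd_mat_add:
  assumes S1: "S1 \<in> carrier_mat n n" "hpd_mat S1" and S2: "S2 \<in> carrier_mat n n" "hpd_mat S2"
  shows "hpd_mat (S1 + S2)"
proof -
  have "((S1 + S2) *\<^sub>v v) \<bullet>c v = (S1 *\<^sub>v v) \<bullet>c v + (S2 *\<^sub>v v) \<bullet>c v"
    if "v \<in> carrier_vec n" for v
    using S1 S2 that by (simp add: add_mult_distrib_mat_vec add_scalar_prod_distrib[of _ n])
  moreover have "cadj (S1 + S2) = cadj S1 + cadj S2"
    by (rule eq_matI) (use S1 S2 in auto)
  ultimately show ?thesis
    using S1 S2 by (simp add: hpd_mat_iff[of _ n] add_pos_pos)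
qed

lemma hpd_mat_trace_congruence_eq_0:
  assumes H: "H \<in> carrier_mat m m" "hpd_mat H" and X: "X \<in> carrier_mat m n"
    and tr: "trace (cadj X * H * X) = 0"
  shows "X = 0\<^sub>m m n"
proof -
  have pos: "0 < Re ((H *\<^sub>v w) \<bullet>c w)" if "w \<in> carrier_vec m" "w \<noteq> 0\<^sub>v m" for w
    using H that hpd_mat_iff by blast
  have nonneg: "0 \<le> Re ((H *\<^sub>v col X j) \<bullet>c col X j)" for j
    using pos[of "col X j"] H X by (cases "col X j = 0\<^sub>v m") (auto intro: less_imp_le)
  have "(\<Sum>j<n. Re ((H *\<^sub>v col X j) \<bullet>c col X j)) = 0"
    using arg_cong[OF tr, of Re] unfolding trace_cadj_mult_mult[OF X H(1)] by simp
  then have zero: "Re ((H *\<^sub>v col X j) \<bullet>c col X j) = 0" if "j < n" for j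
    using that nonneg by (subst (asm) sum_nonneg_eq_0_iff) auto
  have col0: "col X j = 0\<^sub>v m" if "j < n" for j
  proof (rule ccontr)
    assume "col X j \<noteq> 0\<^sub>v m"
    then show False
      using pos[of "col X j"] zero[OF that] X that by auto
  qed
  show ?thesis
  proof (rule eq_matI)
    fix i j assume "i < dim_row (0\<^sub>m m n)" "j < dim_col (0\<^sub>m m n)"
    then show "X $$ (i, j) = 0\<^sub>m m n $$ (i, j)"
      using arg_cong[OF col0[of j], of "\<lambda>v. v $ i"] X by simp
  qed (use X in auto)
qed

lemma hpd_mat_sqrt_unique:
  assumes S1: "S1 \<in> carrier_mat n n" "hpd_mat S1" and S2: "S2 \<in> carrier_mat n n" "hpd_mat S2"
    and eq: "S1 * S1 = S2 * S2"
  shows "S1 = S2"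
proof -
  have D: "S1 - S2 \<in> carrier_mat n n" and H: "S1 + S2 \<in> carrier_mat n n"
    using S1 S2 by auto
  have "cadj (S1 - S2) = S1 - S2"
    using S1 S2 hpd_mat_iff by (intro eq_matI) (auto simp: cadj_eq_self_index)
  then have "trace (cadj (S1 - S2) * (S1 + S2) * (S1 - S2)) = 0"
    using trace_anticomm_eq_0[OF D H square_eq_anticomm[OF S1(1) S2(1) eq]] by simp
  then have D0: "S1 - S2 = 0\<^sub>m n n"
    using hpd_mat_trace_congruence_eq_0[OF H hpd_mat_add[OF S1 S2] D] by simp
  have "S1 $$ (i, j) - S2 $$ (i, j) = 0" if "i < n" "j < n" for i j
    using arg_cong[OF D0, of "\<lambda>M. M $$ (i, j)"] S1 S2 that by simp
  then show ?thesis
    using S1 S2 by (intro eq_matI) auto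
qed

lemma inv_sqrt_mat_eqI:
  assumes M: "M \<in> carrier_mat k k" and T: "T \<in> carrier_mat k k" "hpd_mat T" and TTM: "T * T * M = 1\<^sub>m k"
  shows "inv_sqrt_mat M = T"
  unfolding inv_sqrt_mat_def
proof (rule the_equality)
  show "T \<in> carrier_mat (dim_row M) (dim_row M) \<and> hpd_mat T \<and> T * T * M = 1\<^sub>m (dim_row M)"
    using M T TTM by simp
next
  fix S assume S: "S \<in> carrier_mat (dim_row M) (dim_row M) \<and> hpd_mat S \<and> S * S * M = 1\<^sub>m (dim_row M)"
  then have Sc: "S \<in> carrier_mat k k" and SSM: "S * S * M = 1\<^sub>m k"
    using M by auto
  have "M * (T * T) = 1\<^sub>m k"
    using mat_mult_left_right_inverse[OF _ M TTM] T by simp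
  then have "S * S = T * T"
    using Sc T M SSM assoc_mult_mat[of "S * S" k k M k "T * T" k] by simp
  then show "S = T"
    using hpd_mat_sqrt_unique Sc S T by blast
qed

lemma hpd_mat_mult_cadj:
  assumes K: "K \<in> carrier_mat r r" and L: "L \<in> carrier_mat r r" and inv: "L * cadj K = 1\<^sub>m r"
  shows "hpd_mat (K * cadj K)"
proof -
  have "0 < Re (((K * cadj K) *\<^sub>v v) \<bullet>c v)" if v: "v \<in> carrier_vec r" "v \<noteq> 0\<^sub>v r" for v
  proof -
    have Kv: "cadj K *\<^sub>v v \<in> carrier_vec r"
      using mult_mat_vec_carrier[OF carrier_cadj[OF K] v(1)] .
    have "cadj K *\<^sub>v v \<noteq> 0\<^sub>v r"
    proof
      assume "cadj K *\<^sub>v v = 0\<^sub>v r"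
      then have "L *\<^sub>v (cadj K *\<^sub>v v) = 0\<^sub>v r"
        using L by simp
      then show False
        using v L K inv assoc_mult_mat_vec[of L r r "cadj K" r v] by simp
    qed
    moreover have "((K * cadj K) *\<^sub>v v) \<bullet>c v = (cadj K *\<^sub>v v) \<bullet>c (cadj K *\<^sub>v v)"
      using v K cscalar_prod_cadj[OF K Kv v(1)] assoc_mult_mat_vec[of K r r "cadj K" r v] by simp
    ultimately show ?thesis
      using cscalar_prod_self_pos[OF Kv] by simp
  qed
  moreover have "cadj (K * cadj K) = K * cadj K"
    using K by (simp add: cadj_mult[of _ r r _ r])
  moreover have "K * cadj K \<in> carrier_mat r r"
    using K by simp
  ultimately show ?thesis
    using hpd_mat_iff by blast
qed

lemma inv_sqrt_mat_unitary_factor: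
  assumes M: "M \<in> carrier_mat r r" "cadj M = M" and K: "K \<in> carrier_mat r r"
    and KMK: "cadj K * M * K = 1\<^sub>m r"
  shows "\<exists>W. unitary_mat r W \<and> K = inv_sqrt_mat M * W"
proof -
  note sq = assoc_mult_mat[of _ r r _ r _ r] mult_carrier_mat[of _ r r _ r]
  have "cadj K * (M * K) = 1\<^sub>m r"
    using KMK M K by (simp add: sq)
  then have MKK: "M * K * cadj K = 1\<^sub>m r"
    using mat_mult_left_right_inverse[of "cadj K" r] M K by simp
  define N where "N = K * cadj K"
  have Nc: "N \<in> carrier_mat r r"
    unfolding N_def using K by simp
  have MN: "M * N = 1\<^sub>m r"
    using MKK M K unfolding N_def by (simp add: sq)
  then have NM: "N * M = 1\<^sub>m r"
    using mat_mult_left_right_inverse[OF M(1) Nc] by simp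
  have "hpd_mat N"
    unfolding N_def using hpd_mat_mult_cadj[OF K _ MKK] M K by simp
  then obtain T where T: "T \<in> carrier_mat r r" "hpd_mat T" and TT: "T * T = N"
    using hpd_mat_sqrt_exists[OF Nc] by blast
  have "inv_sqrt_mat M = T"
    using inv_sqrt_mat_eqI[OF M(1) T] TT NM by simp
  define W where "W = T * M * K"
  have "T * W = T * T * M * K"
    unfolding W_def using T M K by (simp add: sq)
  then have TW: "T * W = K"
    unfolding TT NM using K by simp
  have "cadj W = cadj K * M * T"
    unfolding W_def using T M K hpd_mat_iff by (simp add: cadj_mult[of _ r r _ r] sq)
  then have "cadj W * W = cadj K * M * (T * T) * M * K"
    unfolding W_def using T M K by (simp add: sq)
  also have "\<dots> = cadj K * M * K"
    unfolding TT using M K Nc MN by (simp add: sq)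
  finally have "unitary_mat r W"
    using T M K unfolding KMK W_def by (intro unitary_matI) (simp_all add: sq)
  then show ?thesis
    using TW \<open>inv_sqrt_mat M = T\<close> by metis
qed

section \<open>Block embeddings and the Stiefel manifold\<close>

lemma append_rows_one_zero:
  "r \<le> n \<Longrightarrow>
    (1\<^sub>m r @\<^sub>r 0\<^sub>m (n - r) r :: 'a :: zero_neq_one mat) = mat n r (\<lambda>(i, j). of_bool (i = j))"
  by (rule eq_matI) (auto simp: append_rows_def)

lemma append_rows_zero_eq_mult:
  fixes K :: "'a :: semiring_1 mat"
  assumes K: "K \<in> carrier_mat r k" and rn: "r \<le> n"
  shows "K @\<^sub>r 0\<^sub>m (n - r) k = (1\<^sub>m r @\<^sub>r 0\<^sub>m (n - r) r) * K"
proof (rule eq_matI)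
  fix i j assume "i < dim_row ((1\<^sub>m r @\<^sub>r 0\<^sub>m (n - r) r) * K)"
    and "j < dim_col ((1\<^sub>m r @\<^sub>r 0\<^sub>m (n - r) r) * K)"
  then have i: "i < n" and j: "j < k"
    using K rn by (auto simp: append_rows_def)
  have "((1\<^sub>m r @\<^sub>r 0\<^sub>m (n - r) r) * K) $$ (i, j) = (\<Sum>l<r. of_bool (i = l) * K $$ (l, j))"
    unfolding append_rows_one_zero[OF rn] using i j K
    by (subst index_mult_mat_sum[of _ n r _ k]) auto
  then show "(K @\<^sub>r 0\<^sub>m (n - r) k) $$ (i, j) = ((1\<^sub>m r @\<^sub>r 0\<^sub>m (n - r) r) * K) $$ (i, j)"
    using i j K rn by (cases "i < r") (auto simp: append_rows_def sum_of_bool_delta)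
qed (use K rn in \<open>auto simp: append_rows_def\<close>)

lemma append_rows_zero_mult:
  fixes K :: "'a :: semiring_1 mat"
  assumes K: "K \<in> carrier_mat r k" and C: "C \<in> carrier_mat k l" and rn: "r \<le> n"
  shows "(K * C) @\<^sub>r 0\<^sub>m (n - r) l = (K @\<^sub>r 0\<^sub>m (n - r) k) * C"
  using append_rows_zero_eq_mult[OF K rn] append_rows_zero_eq_mult[of "K * C" r l n] K C rn
  by (simp add: append_rows_one_zero assoc_mult_mat[of _ n r _ k _ l])

lemma cadj_mult_ul_block:
  assumes X: "X \<in> carrier_mat n n" and rn: "r \<le> n"
  shows "cadj (1\<^sub>m r @\<^sub>r 0\<^sub>m (n - r) r) * X * (1\<^sub>m r @\<^sub>r 0\<^sub>m (n - r) r) = ul_block r X"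
proof -
  define E :: "complex mat" where "E = mat n r (\<lambda>(i, j). of_bool (i = j))"
  have E: "E \<in> carrier_mat n r" "cadj E \<in> carrier_mat r n"
    unfolding E_def by auto
  have entry: "(cadj E * X * E) $$ (i, j) = X $$ (i, j)" if ij: "i < r" "j < r" for i j
  proof -
    have "(cadj E * X * E) $$ (i, j) = (\<Sum>l<n. (cadj E * X) $$ (i, l) * of_bool (l = j))"
      using ij E X rn by (subst index_mult_mat_sum[of _ r n _ r]) (auto simp: E_def)
    also have "\<dots> = (cadj E * X) $$ (i, j)"
      using ij rn by (simp add: sum_of_bool_delta)
    also have "\<dots> = (\<Sum>l<n. of_bool (i = l) * X $$ (l, j))"
      using ij E X rn by (subst index_mult_mat_sum[of _ r n _ n]) (auto simp: E_def intro!: sum.cong)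
    also have "\<dots> = X $$ (i, j)"
      using ij rn by (simp add: sum_of_bool_delta)
    finally show ?thesis .
  qed
  show ?thesis
    unfolding append_rows_one_zero[OF rn] E_def[symmetric]
  proof (rule eq_matI)
    fix i j assume "i < dim_row (ul_block r X)" "j < dim_col (ul_block r X)"
    then have ij: "i < r" "j < r"
      by (simp_all add: ul_block_def)
    show "(cadj E * X * E) $$ (i, j) = ul_block r X $$ (i, j)"
      using entry[OF ij] ij by (simp add: ul_block_def)
  qed (use E X in \<open>simp_all add: ul_block_def\<close>)
qed

lemma cadj_mult_congruence:
  assumes A: "A \<in> carrier_mat m n" and B: "B \<in> carrier_mat n k" and X: "X \<in> carrier_mat m m"
  shows "cadj (A * B) * X * (A * B) = cadj B * (cadj A * X * A) * B"
  using A B X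
  by (simp add: cadj_mult[OF A B] assoc_mult_mat[of _ k n _ m _ m] assoc_mult_mat[of _ k n _ m _ k]
      assoc_mult_mat[of _ n m _ m _ k] assoc_mult_mat[of _ m m _ n _ k] assoc_mult_mat[of _ k n _ n _ k]
      assoc_mult_mat[of _ n m _ n _ k] mult_carrier_mat[of _ n m _ m] mult_carrier_mat[of _ m n _ k]
      mult_carrier_mat[of _ n m _ n] mult_carrier_mat[of _ m m _ n])

lemma carrier_cmat [simp]: "A \<in> carrier_mat m n \<Longrightarrow> cmat A \<in> carrier_mat m n"
  unfolding cmat_def by simp

lemma cmat_one [simp]: "cmat (1\<^sub>m n) = 1\<^sub>m n"
  by (rule eq_matI) (auto simp: cmat_def)

lemma cmat_mult:
  assumes "A \<in> carrier_mat m k" "B \<in> carrier_mat k n"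
  shows "cmat (A * B) = cmat A * cmat B"
  by (rule eq_matI) (use assms in \<open>auto simp: cmat_def scalar_prod_def\<close>)

lemma cadj_cmat: "cadj (cmat A) = cmat (transpose_mat A)"
  by (rule eq_matI) (auto simp: cmat_def)

lemma cadj_ul_block:
  "S \<in> carrier_mat n n \<Longrightarrow> r \<le> n \<Longrightarrow> cadj (ul_block r S) = ul_block r (cadj S)"
  by (rule eq_matI) (auto simp: ul_block_def)

lemma Sigma_P_eq:
  assumes "\<Psi> \<in> carrier_mat n n" "P \<in> carrier_mat n n"
  shows "Sigma_P \<Psi> P = cadj (\<Psi> * P) * (\<Psi> * P)"
  using assms unfolding Sigma_P_def
  by (simp add: cadj_mult[of _ n n _ n] assoc_mult_mat[of _ n n _ n _ n] mult_carrier_mat[of _ n n _ n])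

lemma stiefel_mult_orthogonal:
  assumes U: "U \<in> stiefel r n" and W: "real_orthogonal_mat r W"
  shows "U * W \<in> stiefel r n"
proof -
  have c: "U \<in> carrier_mat n r" "W \<in> carrier_mat r r" "transpose_mat U * U = 1\<^sub>m r"
    "transpose_mat W * W = 1\<^sub>m r"
    using U W unfolding stiefel_def real_orthogonal_mat_def by auto
  have "transpose_mat (U * W) * (U * W) = transpose_mat W * (transpose_mat U * (U * W))"
    using c by (simp add: transpose_mult[of U n r W r] assoc_mult_mat[of _ r r _ n _ r])
  also have "transpose_mat U * (U * W) = W"
    using c by (simp add: assoc_mult_mat[of _ r n _ r _ r, symmetric])
  finally show ?thesis
    using c unfolding stiefel_def by simp
qed

lemma Sigma11_hermitian:
  assumes "\<Psi> \<in> carrier_mat n n" "P \<in> carrier_mat n n" "r \<le> n"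
  shows "Sigma11 r \<Psi> P \<in> carrier_mat r r" and "cadj (Sigma11 r \<Psi> P) = Sigma11 r \<Psi> P"
proof -
  have "cadj (Sigma_P \<Psi> P) = Sigma_P \<Psi> P"
    using assms by (simp add: Sigma_P_eq cadj_mult[of _ n n _ n] mult_carrier_mat[of _ n n _ n])
  moreover have "Sigma_P \<Psi> P \<in> carrier_mat n n"
    using assms by (simp add: Sigma_P_eq mult_carrier_mat[of _ n n _ n])
  ultimately show "cadj (Sigma11 r \<Psi> P) = Sigma11 r \<Psi> P"
    unfolding Sigma11_def using assms(3) by (simp add: cadj_ul_block)
  show "Sigma11 r \<Psi> P \<in> carrier_mat r r"
    by (simp add: Sigma11_def ul_block_def)
qed

lemma stiefel_block_congruence:
  assumes Y: "Y \<in> carrier_mat n n" and K: "K \<in> carrier_mat r r" and rn: "r \<le> n"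
    and U: "U \<in> stiefel r n" and U_eq: "cmat U = Y * (K @\<^sub>r 0\<^sub>m (n - r) r)"
  shows "cadj K * ul_block r (cadj Y * Y) * K = 1\<^sub>m r"
proof -
  define E :: "complex mat" where "E = 1\<^sub>m r @\<^sub>r 0\<^sub>m (n - r) r"
  have Ec: "E \<in> carrier_mat n r"
    unfolding E_def append_rows_one_zero[OF rn] by simp
  have YY: "cadj Y * Y \<in> carrier_mat n n"
    using Y by (simp add: mult_carrier_mat[of _ n n _ n])
  have Uc: "U \<in> carrier_mat n r" "transpose_mat U * U = 1\<^sub>m r"
    using U unfolding stiefel_def by auto
  have "cadj K * ul_block r (cadj Y * Y) * K = cadj (E * K) * (cadj Y * Y) * (E * K)"
    unfolding cadj_mult_congruence[OF Ec K YY] cadj_mult_ul_block[OF YY rn, folded E_def] ..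
  also have "\<dots> = cadj (Y * (E * K)) * 1\<^sub>m n * (Y * (E * K))"
    using cadj_mult_congruence[OF Y _ one_carrier_mat, of "E * K" r] Y Ec K by simp
  also have "\<dots> = cadj (cmat U) * cmat U"
    unfolding U_eq append_rows_zero_eq_mult[OF K rn] E_def using Uc Y Ec K rn
    by (simp add: right_mult_one_mat[of _ r n] flip: E_def)
  also have "\<dots> = 1\<^sub>m r"
    using Uc by (simp add: cadj_cmat cmat_mult[of _ r n _ r, symmetric])
  finally show ?thesis .
qed

lemma stiefel_block_mult:
  assumes Y: "Y \<in> carrier_mat n n" and K: "K \<in> carrier_mat r r" and rn: "r \<le> n"
    and U: "U \<in> carrier_mat n r" and W: "W \<in> carrier_mat r r"
    and U_eq: "cmat U = Y * (K @\<^sub>r 0\<^sub>m (n - r) r)"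
  shows "Y * ((K * cmat W) @\<^sub>r 0\<^sub>m (n - r) r) = cmat (U * W)"
proof -
  have Kz: "K @\<^sub>r 0\<^sub>m (n - r) r \<in> carrier_mat n r"
    using K rn carrier_append_rows[of K r r "0\<^sub>m (n - r) r" "n - r"] by simp
  show ?thesis
    unfolding append_rows_zero_mult[OF K carrier_cmat[OF W] rn] using Y Kz U W
    by (simp add: U_eq cmat_mult[of _ n r _ r] assoc_mult_mat[of _ n n _ r _ r])
qed

theorem lemma2:
  fixes n r :: nat and A :: "real mat" and \<Psi> \<Psi>inv P K :: "complex mat" and U :: "real mat"
  assumes "1 \<le> r" and "r \<le> n - 1"
    and "A \<in> carrier_mat n n"
    and "\<Psi> \<in> carrier_mat n n" and "\<Psi>inv \<in> carrier_mat n n"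
    and "\<Psi> * \<Psi>inv = 1\<^sub>m n" and "\<Psi>inv * \<Psi> = 1\<^sub>m n"
    and "\<forall>j<n. unit_vec_norm (col \<Psi> j) \<and> gen_eigenvector (cmat A) (col \<Psi> j)"
    and "U \<in> stiefel r n"
    and "unitary_mat n P"
    and "K \<in> carrier_mat r r" and "invertible_mat K"
    and "\<Psi>inv * cmat U = P * (K @\<^sub>r 0\<^sub>m (n - r) r)"
  shows "\<exists>WP. unitary_mat r WP \<and> K = inv_sqrt_mat (Sigma11 r \<Psi> P) * WP \<and>
           (\<forall>W. real_orthogonal_mat r W \<longrightarrow>
              \<Psi> * P * ((inv_sqrt_mat (Sigma11 r \<Psi> P) * WP * cmat W) @\<^sub>r 0\<^sub>m (n - r) r)
                = cmat (U * W)
              \<and> U * W \<in> stiefel r n)"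
proof -
  have rn: "r \<le> n"
    using assms(1,2) by linarith
  have P: "P \<in> carrier_mat n n"
    using assms(10) unfolding unitary_mat_def by simp
  have Y: "\<Psi> * P \<in> carrier_mat n n"
    using assms(4) P by simp
  have "cmat U = \<Psi> * (P * (K @\<^sub>r 0\<^sub>m (n - r) r))"
    using eq_mult_of_right_inverse[OF assms(4-6) _ assms(13), where k = r] assms(9) unfolding stiefel_def by simp
  then have U_eq: "cmat U = \<Psi> * P * (K @\<^sub>r 0\<^sub>m (n - r) r)"
    using assms(4,11) P rn carrier_append_rows[of K r r "0\<^sub>m (n - r) r" "n - r"]
    by (simp add: assoc_mult_mat[of _ n n _ n _ r])
  have "cadj K * Sigma11 r \<Psi> P * K = 1\<^sub>m r"
    unfolding Sigma11_def Sigma_P_eq[OF assms(4) P]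
    using stiefel_block_congruence[OF Y assms(11) rn assms(9) U_eq] .
  then obtain WP where WP: "unitary_mat r WP" "K = inv_sqrt_mat (Sigma11 r \<Psi> P) * WP"
    using inv_sqrt_mat_unitary_factor[OF Sigma11_hermitian[OF assms(4) P rn] assms(11)] by blast
  show ?thesis
    using WP stiefel_block_mult[OF Y assms(11) rn _ _ U_eq] stiefel_mult_orthogonal[OF assms(9)] assms(9)
    unfolding real_orthogonal_mat_def stiefel_def by (auto simp flip: WP(2))
qed

end
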